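(* Let $n=2^k$ with $k>2$ an integer, and let $G=\langle 2^{k-1}-1\rangle$ be the subgroup of $\mathbb{Z}_n^\times$ generated by $2^{k-1}-1$. Then the coset index function $f_G$ is a $(2^k,2^{k-1}+1,\{0,2\})$ zero-difference function.
   Context: For a subgroup $G$ of $\mathbb{Z}_n^\times$ and $r\in\mathbb{Z}_n$, the coset $rG=\{rg\mid g\in G\}$; these cosets partition $\mathbb{Z}_n$, forming a set $D_G$. The coset index function induced by $G$ is $f_G:\mathbb{Z}_n\to\mathbb{Z}_{|D_G|}$, $f_G(x)=h_G(C_x)$, where $C_x$ is the coset containing $x$ and $h_G:D_G\to\mathbb{Z}_{|D_G|}$ is a fixed bijection. A function $f:A\to B$ between finite abelian groups is an $(n,m,S)$ zero-difference function if $n=|A|$, $m=|f(A)|$, and for every nonzero $a\in A$, $|\{x\in A\mid f(x+a)=f(x)\}|\in S$. Here $A=(\mathbb{Z}_n,+)$. *)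

theory Defs
  imports Main
begin

text \<open>Z_n is represented by the residues {0..<n} (nat) with arithmetic mod n.\<close>

definition gen_subgroup :: "nat \<Rightarrow> nat \<Rightarrow> nat set" where
  "gen_subgroup n g = {g ^ i mod n | i. True}"

definition coset :: "nat \<Rightarrow> nat set \<Rightarrow> nat \<Rightarrow> nat set" where
  "coset n G r = (\<lambda>g. r * g mod n) ` G"

definition cosets :: "nat \<Rightarrow> nat set \<Rightarrow> nat set set" where
  "cosets n G = coset n G ` {0..<n}"

definition coset_containing :: "nat \<Rightarrow> nat set \<Rightarrow> nat \<Rightarrow> nat set" where
  "coset_containing n G x = (THE C. C \<in> cosets n G \<and> x \<in> C)"

definition coset_index_fun :: "nat \<Rightarrow> nat set \<Rightarrow> (nat set \<Rightarrow> nat) \<Rightarrow> nat \<Rightarrow> nat" where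
  "coset_index_fun n G h x = h (coset_containing n G x)"

definition zero_difference_fun :: "nat \<Rightarrow> (nat \<Rightarrow> 'b) \<Rightarrow> nat \<Rightarrow> nat set \<Rightarrow> bool" where
  "zero_difference_fun n f m S \<longleftrightarrow>
     card (f ` {0..<n}) = m \<and>
     (\<forall>a \<in> {1..<n}. card {x \<in> {0..<n}. f ((x + a) mod n) = f x} \<in> S)"

end

theory Submission
  imports Defs "HOL-Number_Theory.Cong"
begin

(* For n = 2^k the residue g = 2^(k-1) - 1 satisfies g^2 = 1, so G = {1, g} and the cosets
   are the orbits {x, x g} of the involution x |-> x g of Z_n. Its fixed points form the
   kernel {0, 2^(k-1)} of x |-> x (g - 1), which gives (n + 2) / 2 cosets. For nonzero a,
   f_G(x + a) = f_G(x) means x + a = x g, i.e. x (g - 1) = a, and the solution set of this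
   linear congruence is empty or a translate of that kernel, so it has 0 or 2 elements. *)

lemma inj_on_add_mod:
  fixes t n :: nat
  shows "inj_on (\<lambda>y. (y + t) mod n) {0..<n}"
proof (rule inj_onI)
  fix x y assume "(x + t) mod n = (y + t) mod n" "x \<in> {0..<n}" "y \<in> {0..<n}"
  then have "[x = y] (mod n)"
    using cong_add_rcancel_nat[of x t y n] by (simp add: cong_def)
  then show "x = y"
    using \<open>x \<in> {0..<n}\<close> \<open>y \<in> {0..<n}\<close> by (simp add: cong_less_modulus_unique_nat)
qed

lemma card_le_card_if_translate_mod:
  fixes t n :: nat
  assumes "A \<subseteq> {0..<n}" and "(\<lambda>y. (y + t) mod n) ` A \<subseteq> B" and "finite B"
  shows "card A \<le> card B"
  using inj_on_subset[OF inj_on_add_mod assms(1)] assms(2,3) by (rule card_inj_on_le)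

lemma card_mult_cong_fibre:
  fixes n c b :: nat
  shows "card {x \<in> {0..<n}. [x * c = b] (mod n)} \<in> {0, card {x \<in> {0..<n}. [x * c = 0] (mod n)}}"
proof (cases "\<exists>x0 < n. [x0 * c = b] (mod n)")
  case False
  then show ?thesis by auto
next
  case True
  then obtain x0 where x0: "x0 < n" "[x0 * c = b] (mod n)" by blast
  let ?F = "{x \<in> {0..<n}. [x * c = b] (mod n)}"
  let ?K = "{x \<in> {0..<n}. [x * c = 0] (mod n)}"
  have "(\<lambda>y. (y + x0) mod n) ` ?K \<subseteq> ?F"
  proof (rule image_subsetI)
    fix y assume "y \<in> ?K"
    then have "[y * c + x0 * c = 0 + b] (mod n)" using x0(2) by (intro cong_add) auto
    then have "[(y + x0) * c = b] (mod n)" by (simp add: algebra_simps)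
    then show "(y + x0) mod n \<in> ?F" using x0(1) by (simp add: cong_def mod_mult_left_eq)
  qed
  then have "card ?K \<le> card ?F"
    by (rule card_le_card_if_translate_mod[rotated]) auto
  moreover have "(\<lambda>z. (z + (n - x0)) mod n) ` ?F \<subseteq> ?K"
  proof (rule image_subsetI)
    fix z assume "z \<in> ?F"
    then have "[z * c = b] (mod n)" by simp
    then have "[z * c = x0 * c] (mod n)"
      using cong_sym[OF x0(2)] by (rule cong_trans)
    then have "[z * c + (n - x0) * c = x0 * c + (n - x0) * c] (mod n)"
      by (simp only: cong_add_rcancel_nat)
    also have "x0 * c + (n - x0) * c = n * c"
      using x0(1) by (simp flip: add_mult_distrib)
    also have "[n * c = 0] (mod n)"
      by (simp add: cong_0_iff)
    finally have "[(z + (n - x0)) * c = 0] (mod n)"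
      by (simp only: add_mult_distrib)
    then show "(z + (n - x0)) mod n \<in> ?K" using x0(1) by (simp add: cong_def mod_mult_left_eq)
  qed
  then have "card ?F \<le> card ?K"
    by (rule card_le_card_if_translate_mod[rotated]) auto
  ultimately show ?thesis by simp
qed

lemma card_orbits_of_involution:
  assumes "finite A" and "\<forall>x \<in> A. \<sigma> x \<in> A \<and> \<sigma> (\<sigma> x) = x"
  shows "2 * card ((\<lambda>x. {x, \<sigma> x}) ` A) = card A + card {x \<in> A. \<sigma> x = x}"
proof -
  let ?O = "(\<lambda>x. {x, \<sigma> x}) ` A"
  let ?w = "\<lambda>x. 1 + of_bool (\<sigma> x = x) :: nat"
  have A: "A = \<Union> ?O" using assms(2) by auto
  have same_orbit: "{y, \<sigma> y} = {x, \<sigma> x}" if "x \<in> A" and "y \<in> {x, \<sigma> x}" for x y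
    using that assms(2) by auto
  have orbits_disjoint: "C \<inter> D = {}" if "C \<in> ?O" and "D \<in> ?O" and "C \<noteq> D" for C D
  proof (rule ccontr)
    assume "C \<inter> D \<noteq> {}"
    then obtain z where "z \<in> C" and "z \<in> D" by blast
    then have "C = {z, \<sigma> z}" and "D = {z, \<sigma> z}"
      using \<open>C \<in> ?O\<close> \<open>D \<in> ?O\<close> same_orbit by blast+
    with \<open>C \<noteq> D\<close> show False by simp
  qed
  have "card A + card {x \<in> A. \<sigma> x = x} = (\<Sum>x\<in>A. ?w x)"
    unfolding sum.distrib using assms(1) by (simp add: Int_def)
  also have "\<dots> = (\<Sum>C\<in>?O. \<Sum>x\<in>C. ?w x)"
    using orbits_disjoint
    by (subst (1) A, intro sum.Union_disjoint[unfolded o_def]) auto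
  also have "\<dots> = (\<Sum>C\<in>?O. 2)" \<comment> \<open>an orbit has two points or one fixed point\<close>
  proof (rule sum.cong)
    fix C assume "C \<in> ?O"
    then obtain x where "x \<in> A" "C = {x, \<sigma> x}" by blast
    moreover have "\<sigma> (\<sigma> x) = x" using \<open>x \<in> A\<close> assms(2) by blast
    ultimately show "(\<Sum>y\<in>C. ?w y) = 2" by (cases "\<sigma> x = x") auto
  qed simp
  finally show ?thesis by simp
qed

locale self_inverse_residue =
  fixes n g :: nat
  assumes modulus_gt_1: "1 < n"
    and less_modulus: "g < n"
    and square_cong_1: "[g * g = 1] (mod n)"
begin

lemma g_gt_0: "0 < g"
  using modulus_gt_1 square_cong_1 by (cases "g = 0") (auto simp: cong_def)

lemma mult_mod_involutive: "x < n \<Longrightarrow> x * g mod n * g mod n = x"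
proof -
  assume "x < n"
  have "[x * (g * g) = x * 1] (mod n)" using square_cong_1 by (rule cong_scalar_left)
  then show ?thesis using \<open>x < n\<close> by (simp add: cong_def mod_mult_left_eq mult.assoc)
qed

lemma mult_mod_eq_add_mod_iff: "x * g mod n = (x + a) mod n \<longleftrightarrow> [x * (g - 1) = a] (mod n)"
proof -
  have "x * g = x * (g - 1) + x" using g_gt_0 by (simp add: algebra_simps)
  then show ?thesis by (simp flip: cong_def add: add.commute[of x] cong_add_rcancel_nat)
qed

lemma gen_subgroup_eq: "gen_subgroup n g = {1, g}"
proof -
  have powers: "g ^ i mod n \<in> {1, g}" for i
  proof (induction i)
    case 0
    then show ?case using modulus_gt_1 by simp
  next
    case (Suc i)
    have "g ^ Suc i mod n = g * (g ^ i mod n) mod n" by (simp add: mod_mult_right_eq)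
    with Suc show ?case using square_cong_1 modulus_gt_1 less_modulus by (auto simp: cong_def)
  qed
  have "1 = g ^ 0 mod n" "g = g ^ 1 mod n" using modulus_gt_1 less_modulus by auto
  then show ?thesis using powers unfolding gen_subgroup_def by blast
qed

lemma cosets_eq: "cosets n {1, g} = (\<lambda>x. {x, x * g mod n}) ` {0..<n}"
  unfolding cosets_def coset_def by auto

lemma coset_containing_eq: "x < n \<Longrightarrow> coset_containing n {1, g} x = {x, x * g mod n}"
  unfolding coset_containing_def
proof (rule the_equality)
  assume "x < n"
  then show "{x, x * g mod n} \<in> cosets n {1, g} \<and> x \<in> {x, x * g mod n}"
    unfolding cosets_eq by auto
next
  fix C assume "C \<in> cosets n {1, g} \<and> x \<in> C"
  then show "C = {x, x * g mod n}"
    unfolding cosets_eq using mult_mod_involutive by auto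
qed

lemma card_cosets:
  "2 * card (cosets n {1, g}) = n + card {x \<in> {0..<n}. [x * (g - 1) = 0] (mod n)}"
proof -
  have "x * g mod n = x \<longleftrightarrow> [x * (g - 1) = 0] (mod n)" if "x < n" for x
    using mult_mod_eq_add_mod_iff[of x 0] that by simp
  then have fixed_points:
    "{x \<in> {0..<n}. x * g mod n = x} = {x \<in> {0..<n}. [x * (g - 1) = 0] (mod n)}"
    by auto
  have "2 * card ((\<lambda>x. {x, x * g mod n}) ` {0..<n})
      = card {0..<n} + card {x \<in> {0..<n}. x * g mod n = x}"
    by (rule card_orbits_of_involution) (use mult_mod_involutive in auto)
  then show ?thesis
    unfolding cosets_eq fixed_points by simp
qed

lemma coset_index_fun_eq: "x < n \<Longrightarrow> coset_index_fun n {1, g} h x = h {x, x * g mod n}"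
  by (simp only: coset_index_fun_def coset_containing_eq)

lemma coset_index_fun_eq_iff:
  assumes "inj_on h (cosets n {1, g})" and "x < n" and "y < n"
  shows "coset_index_fun n {1, g} h y = coset_index_fun n {1, g} h x \<longleftrightarrow> y = x \<or> y = x * g mod n"
proof -
  have "coset_index_fun n {1, g} h y = coset_index_fun n {1, g} h x
      \<longleftrightarrow> h {y, y * g mod n} = h {x, x * g mod n}"
    using assms(2,3) by (simp only: coset_index_fun_eq)
  also have "\<dots> \<longleftrightarrow> {y, y * g mod n} = {x, x * g mod n}"
    using assms unfolding cosets_eq by (intro inj_on_eq_iff) auto
  also have "\<dots> \<longleftrightarrow> y = x \<or> y = x * g mod n"
  proof
    assume "{y, y * g mod n} = {x, x * g mod n}"
    then show "y = x \<or> y = x * g mod n" by blast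
  next
    assume "y = x \<or> y = x * g mod n"
    then show "{y, y * g mod n} = {x, x * g mod n}" using mult_mod_involutive[OF assms(2)] by auto
  qed
  finally show ?thesis .
qed

lemma zero_difference_fun_coset_index_fun:
  assumes "inj_on h (cosets n {1, g})"
    and "\<forall>a \<in> {1..<n}. card {x \<in> {0..<n}. [x * (g - 1) = a] (mod n)} \<in> S"
  shows "zero_difference_fun n (coset_index_fun n {1, g} h) (card (cosets n {1, g})) S"
  unfolding zero_difference_fun_def
proof
  let ?f = "coset_index_fun n {1, g} h"
  have "?f ` {0..<n} = h ` cosets n {1, g}"
    unfolding cosets_eq image_image by (rule image_cong[OF refl], rule coset_index_fun_eq) simp
  then show "card (?f ` {0..<n}) = card (cosets n {1, g})"
    using assms(1) by (simp add: card_image)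
  show "\<forall>a \<in> {1..<n}. card {x \<in> {0..<n}. ?f ((x + a) mod n) = ?f x} \<in> S"
  proof
    fix a assume a: "a \<in> {1..<n}"
    have "?f ((x + a) mod n) = ?f x \<longleftrightarrow> [x * (g - 1) = a] (mod n)" if "x < n" for x
    proof -
      have "(x + a) mod n \<noteq> x"
        using a that cong_add_lcancel_nat[of x a 0 n] by (auto simp: cong_def)
      then show ?thesis
        using coset_index_fun_eq_iff[OF assms(1) that, of "(x + a) mod n"] modulus_gt_1
          mult_mod_eq_add_mod_iff[of x a] by auto
    qed
    then have "{x \<in> {0..<n}. ?f ((x + a) mod n) = ?f x} = {x \<in> {0..<n}. [x * (g - 1) = a] (mod n)}"
      by auto
    then show "card {x \<in> {0..<n}. ?f ((x + a) mod n) = ?f x} \<in> S" using assms(2) a by simp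
  qed
qed

end

lemma pow2_half_minus_1_square_cong_1:
  fixes k :: nat
  assumes "2 \<le> k"
  shows "[(2 ^ (k - 1) - 1) * (2 ^ (k - 1) - 1) = 1 :: nat] (mod 2 ^ k)"
proof -
  obtain j where k: "k = j + 2" using assms le_Suc_ex by (metis add.commute)
  define m :: nat where "m = 2 ^ j"
  have pow: "2 ^ (k - 1) = 2 * m" "2 ^ k = 4 * m"
    by (simp_all add: k m_def power_add)
  have "(2 * m - 1) * (2 * m - 1) = 1 + 4 * m * (m - 1)"
    by (cases m) (auto simp: m_def algebra_simps)
  then have "[(2 * m - 1) * (2 * m - 1) = 1 + 4 * m * (m - 1)] (mod 4 * m)"
    by (simp only: cong_refl)
  also have "[1 + 4 * m * (m - 1) = 1] (mod 4 * m)"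
    unfolding cong_def by (rule mod_mult_self2)
  finally show ?thesis unfolding pow .
qed

lemma pow2_kernel_mult_half_minus_2:
  fixes k :: nat
  assumes "2 < k"
  shows "{x \<in> {0..<2 ^ k}. [x * (2 ^ (k - 1) - 2) = 0] (mod 2 ^ k)} = {0, 2 ^ (k - 1) :: nat}"
proof -
  obtain j where k: "k = j + 3" using assms by (metis add.commute less_iff_Suc_add numeral_2_eq_2 numeral_3_eq_3 add_Suc_right)
  define d :: nat where "d = 2 ^ (k - 1)"
  have d: "2 ^ k = 2 * d" "d - 2 = 2 * (2 * 2 ^ j - 1)" "odd (2 * 2 ^ j - 1 :: nat)"
    by (simp_all add: k d_def power_add)
  have "[x * (d - 2) = 0] (mod 2 ^ k) \<longleftrightarrow> d dvd x" for x
  proof -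
    have "[x * (d - 2) = 0] (mod 2 ^ k) \<longleftrightarrow> 2 ^ k dvd (2 * x) * (2 * 2 ^ j - 1)"
      unfolding d(2) by (simp add: cong_0_iff ac_simps)
    also have "\<dots> \<longleftrightarrow> 2 ^ k dvd 2 * x"
      using d(3) by (simp add: coprime_dvd_mult_left_iff)
    also have "\<dots> \<longleftrightarrow> d dvd x"
      unfolding d(1) by simp
    finally show ?thesis .
  qed
  moreover have "x < 2 * d \<and> d dvd x \<longleftrightarrow> x = 0 \<or> x = d" for x
  proof
    assume "x < 2 * d \<and> d dvd x"
    then obtain q where "x = d * q" "q < 2" by (auto simp: dvd_def)
    then show "x = 0 \<or> x = d" by (auto simp: less_2_cases_iff)
  qed (auto simp: d_def)
  ultimately show ?thesis unfolding d_def d(1)[unfolded d_def] by auto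
qed

theorem theorem3p4:
  fixes k n :: nat and G :: "nat set" and h :: "nat set \<Rightarrow> nat"
  assumes "k > 2"
    and "n = 2 ^ k"
    and "G = gen_subgroup n (2 ^ (k - 1) - 1)"
    and "bij_betw h (cosets n G) {0..<card (cosets n G)}"
  shows "zero_difference_fun n (coset_index_fun n G h) (2 ^ (k - 1) + 1) {0, 2}"
proof -
  let ?g = "2 ^ (k - 1) - 1 :: nat"
  have half: "n = 2 * 2 ^ (k - 1)"
    using assms(1,2) by (simp flip: power_Suc)
  interpret self_inverse_residue n ?g
  proof
    have "0 < (2::nat) ^ (k - 1)" by simp
    then show "1 < n" "?g < n" unfolding half by linarith+
    show "[?g * ?g = 1] (mod n)" using pow2_half_minus_1_square_cong_1[of k] assms(1,2) by simp
  qed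
  have G: "G = {1, ?g}"
    using assms(3) gen_subgroup_eq by simp
  have kernel: "{x \<in> {0..<n}. [x * (?g - 1) = 0] (mod n)} = {0, 2 ^ (k - 1)}"
    unfolding assms(2) diff_diff_left one_add_one by (rule pow2_kernel_mult_half_minus_2[OF assms(1)])
  have card_kernel: "card {0, 2 ^ (k - 1) :: nat} = 2" by simp
  have "2 * card (cosets n G) = n + 2"
    using card_cosets unfolding kernel card_kernel G .
  then have "card (cosets n G) = 2 ^ (k - 1) + 1"
    unfolding half by simp
  moreover have "card {x \<in> {0..<n}. [x * (?g - 1) = a] (mod n)} \<in> {0, 2}" for a
    using card_mult_cong_fibre[of n "?g - 1" a] unfolding kernel card_kernel .
  ultimately show ?thesis
    using zero_difference_fun_coset_index_fun bij_betw_imp_inj_on[OF assms(4)] unfolding G by simp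
qed

end
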